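(* Let $m\geq 3$. The matching $\mu$ on the face poset of $\Delta_m^{3,2}$ has at least $(m-2)^3$ critical cells of dimension $3$.
   Context: $\Delta_m^{3,2}=\mathrm{VR}(\{0,\ldots,m\}^3;2)$, where $\{0,\ldots,m\}^3$ carries the Manhattan metric $d(x,y)=\sum_i|x_i-y_i|$ and $\mathrm{VR}(X;r)$ is the complex of finite subsets of diameter $\leq r$. Order the vertices as $v_1\prec\cdots\prec v_N$ ($N=(m+1)^3$) in the anti-lexicographic order ($x\prec y$ iff at the largest index $i$ with $x_i\neq y_i$, $x_i<y_i$). Let $T_0$ be the set of all simplices, including the empty simplex. For $i=1,\ldots,N$ put $S_i=\{\sigma\in T_{i-1}: v_i\notin\sigma,\ \sigma\cup\{v_i\}\in T_{i-1}\}$, $\mu(\sigma)=\sigma\cup\{v_i\}$ for $\sigma\in S_i$, and $T_i=T_{i-1}\setminus(S_i\cup\{\sigma\cup\{v_i\}:\sigma\in S_i\})$. The critical cells of $\mu$ are the simplices in $T_N$; the dimension of a simplex is its cardinality minus one. *)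

theory Defs
  imports Main
begin

type_synonym pt = "nat \<times> nat \<times> nat"

definition manhattan :: "pt \<Rightarrow> pt \<Rightarrow> nat" where
  "manhattan p q = (case p of (x1, x2, x3) \<Rightarrow> case q of (y1, y2, y3) \<Rightarrow>
      nat \<bar>int x1 - int y1\<bar> + nat \<bar>int x2 - int y2\<bar> + nat \<bar>int x3 - int y3\<bar>)"

definition grid :: "nat \<Rightarrow> pt set" where
  "grid m = {0..m} \<times> {0..m} \<times> {0..m}"

text \<open>Vietoris--Rips complex VR(X; r): all finite subsets of X of diameter at most r,
  including the empty simplex.\<close>
definition VR :: "pt set \<Rightarrow> nat \<Rightarrow> pt set set" where
  "VR X r = {\<sigma>. \<sigma> \<subseteq> X \<and> finite \<sigma> \<and> (\<forall>x\<in>\<sigma>. \<forall>y\<in>\<sigma>. manhattan x y \<le> r)}"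

definition Delta32 :: "nat \<Rightarrow> pt set set" where
  "Delta32 m = VR (grid m) 2"

text \<open>Vertices v_1, ..., v_N in anti-lexicographic order: the last coordinate is most
  significant, then the second, then the first.\<close>
definition verts :: "nat \<Rightarrow> pt list" where
  "verts m = [(a, b, c). c \<leftarrow> [0..<Suc m], b \<leftarrow> [0..<Suc m], a \<leftarrow> [0..<Suc m]]"

definition S_step :: "pt \<Rightarrow> pt set set \<Rightarrow> pt set set" where
  "S_step v T = {\<sigma> \<in> T. v \<notin> \<sigma> \<and> insert v \<sigma> \<in> T}"

definition T_step :: "pt \<Rightarrow> pt set set \<Rightarrow> pt set set" where
  "T_step v T = T - (S_step v T \<union> (insert v) ` S_step v T)"

definition T_final :: "nat \<Rightarrow> pt set set" where
  "T_final m = fold T_step (verts m) (Delta32 m)"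

text \<open>Critical cells of the matching mu are the simplices in T_N; dimension = card - 1.\<close>
definition critical_cells :: "nat \<Rightarrow> nat \<Rightarrow> pt set set" where
  "critical_cells m d = {\<sigma> \<in> T_final m. card \<sigma> = Suc d}"

end

theory Submission
  imports Defs
begin

(* Every horizontal unit square Q of height c >= 1 is critical. Q is a maximal simplex, so
   it could only be matched down, with a facet L = Q - {w} at the step of a vertex w of Q.
   Let u be the vertex directly below the right-angle corner of the triangle L. It precedes
   w, and no vertex before u lies in or extends the tetrahedron insert u L, so this tetrahedron
   survives until the step of u, where L is paired with it unless L is already gone. Hence L
   has disappeared before the step of w, and Q survives. There are m^3 such squares, so in
   fact m^3 <= card (critical_cells m 3) for every m. *)

lemma in_T_step_iff:
  "\<sigma> \<in> T_step v T \<longleftrightarrow>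
     \<sigma> \<in> T \<and> (v \<notin> \<sigma> \<longrightarrow> insert v \<sigma> \<notin> T) \<and> (v \<in> \<sigma> \<longrightarrow> \<sigma> - {v} \<notin> T)"
proof -
  have "\<sigma> \<in> insert v ` S_step v T \<longleftrightarrow> v \<in> \<sigma> \<and> \<sigma> - {v} \<in> S_step v T"
  proof
    assume "\<sigma> \<in> insert v ` S_step v T"
    then obtain \<tau> where "\<tau> \<in> S_step v T" "\<sigma> = insert v \<tau>"
      by blast
    then show "v \<in> \<sigma> \<and> \<sigma> - {v} \<in> S_step v T"
      by (simp add: S_step_def)
  next
    assume "v \<in> \<sigma> \<and> \<sigma> - {v} \<in> S_step v T"
    then show "\<sigma> \<in> insert v ` S_step v T"
      by (metis image_eqI insert_Diff)
  qed
  then show ?thesis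
    unfolding T_step_def by (auto simp: S_step_def insert_absorb)
qed

lemma T_step_subset: "T_step v T \<subseteq> T"
  by (auto simp: T_step_def)

lemma fold_T_step_subset: "fold T_step vs T \<subseteq> T"
  by (induction vs arbitrary: T) (use T_step_subset in \<open>force+\<close>)

lemma fold_T_step_keeps_uncovered:
  assumes "\<sigma> \<in> T" "\<forall>v \<in> set vs. v \<notin> \<sigma> \<and> insert v \<sigma> \<notin> T"
  shows "\<sigma> \<in> fold T_step vs T"
  using assms
proof (induction vs arbitrary: T)
  case Nil
  then show ?case by simp
next
  case (Cons v vs)
  have "\<sigma> \<in> T_step v T"
    using Cons.prems by (simp add: in_T_step_iff)
  moreover have "\<forall>v' \<in> set vs. v' \<notin> \<sigma> \<and> insert v' \<sigma> \<notin> T_step v T"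
    using Cons.prems T_step_subset[of v T] by auto
  ultimately show ?case
    by (simp add: Cons.IH)
qed

lemma facet_removed_at_apex:
  assumes "u \<notin> \<tau>" "insert u \<tau> \<in> fold T_step vs T"
  shows "\<tau> \<notin> fold T_step (vs @ [u]) T"
  using assms by (simp add: in_T_step_iff)

lemma fold_T_step_keeps_maximal:
  assumes "\<sigma> \<in> T" "\<And>v. v \<notin> \<sigma> \<Longrightarrow> insert v \<sigma> \<notin> T"
    and "\<And>us v ws. vs = us @ v # ws \<Longrightarrow> v \<in> \<sigma> \<Longrightarrow> \<sigma> - {v} \<notin> fold T_step us T"
  shows "\<sigma> \<in> fold T_step vs T"
proof -
  have "\<sigma> \<in> fold T_step us T" if "vs = us @ ws" for us ws
    using that
  proof (induction us arbitrary: ws rule: rev_induct)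
    case Nil
    then show ?case using assms(1) by simp
  next
    case (snoc v us)
    then have "\<sigma> \<in> fold T_step us T"
      by auto
    moreover have "insert v \<sigma> \<notin> fold T_step us T" if "v \<notin> \<sigma>"
      using assms(2)[OF that] fold_T_step_subset by blast
    moreover have "\<sigma> - {v} \<notin> fold T_step us T" if "v \<in> \<sigma>"
      using assms(3) snoc.prems that by auto
    ultimately show ?case
      by (auto simp: in_T_step_iff)
  qed
  then show ?thesis
    by blast
qed

lemma sorted_wrt_split_at_smaller:
  assumes "sorted_wrt R vs" "asymp R" "vs = us @ v # ws" "u \<in> set vs" "R u v"
  obtains us1 us2 where "us = us1 @ u # us2" "\<forall>x \<in> set us1. R x u"
proof -
  have "u \<notin> set (v # ws)"
    using assms by (auto simp: sorted_wrt_append dest: asympD)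
  then have "u \<in> set us"
    using assms(3,4) by auto
  then obtain us1 us2 where us: "us = us1 @ u # us2"
    by (meson split_list)
  moreover have "\<forall>x \<in> set us1. R x u"
    using assms(1,3) us by (simp add: sorted_wrt_append)
  ultimately show ?thesis
    using that by blast
qed

(* Such an apex guarantees that \<tau> is matched by the end of the step of u at the latest. *)
definition untouched_apex :: "('v \<Rightarrow> 'v \<Rightarrow> bool) \<Rightarrow> 'v set set \<Rightarrow> 'v set \<Rightarrow> 'v \<Rightarrow> bool" where
  "untouched_apex R T \<tau> u \<longleftrightarrow> u \<notin> \<tau> \<and> insert u \<tau> \<in> T \<and>
     (\<forall>x. R x u \<longrightarrow> x \<notin> insert u \<tau> \<and> insert x (insert u \<tau>) \<notin> T)"

lemma maximal_simplex_with_untouched_apexes_survives: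
  assumes "sorted_wrt R vs" "asymp R"
    and "\<sigma> \<in> T" "\<And>v. v \<notin> \<sigma> \<Longrightarrow> insert v \<sigma> \<notin> T"
    and apex: "\<And>v. v \<in> \<sigma> \<Longrightarrow> \<exists>u \<in> set vs. R u v \<and> untouched_apex R T (\<sigma> - {v}) u"
  shows "\<sigma> \<in> fold T_step vs T"
proof (rule fold_T_step_keeps_maximal[OF assms(3,4)])
  fix us v ws
  assume vs: "vs = us @ v # ws" and "v \<in> \<sigma>"
  then obtain u where u: "u \<in> set vs" "R u v" "untouched_apex R T (\<sigma> - {v}) u"
    using apex by blast
  obtain us1 us2 where us: "us = us1 @ u # us2" and earlier: "\<forall>x \<in> set us1. R x u"
    using sorted_wrt_split_at_smaller[OF assms(1,2) vs u(1,2)] by blast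
  have "insert u (\<sigma> - {v}) \<in> fold T_step us1 T"
    using u(3) earlier unfolding untouched_apex_def by (intro fold_T_step_keeps_uncovered) auto
  then have "\<sigma> - {v} \<notin> fold T_step (us1 @ [u]) T"
    using facet_removed_at_apex u(3) by (simp add: untouched_apex_def)
  then show "\<sigma> - {v} \<notin> fold T_step us T"
    using fold_T_step_subset[of us2 "fold T_step (us1 @ [u]) T"] us by auto
qed

definition antilex_less :: "pt \<Rightarrow> pt \<Rightarrow> bool" where
  "antilex_less p q = (case p of (a, b, c) \<Rightarrow> case q of (a', b', c') \<Rightarrow>
     c < c' \<or> (c = c' \<and> (b < b' \<or> (b = b' \<and> a < a'))))"

lemma asymp_antilex_less: "asymp antilex_less"
  by (rule asympI) (auto simp: antilex_less_def split: prod.splits)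

lemma sorted_wrt_concat_map:
  assumes "sorted_wrt P xs" "\<And>x. x \<in> set xs \<Longrightarrow> sorted_wrt R (f x)"
    and "\<And>x y a b. P x y \<Longrightarrow> a \<in> set (f x) \<Longrightarrow> b \<in> set (f y) \<Longrightarrow> R a b"
  shows "sorted_wrt R (concat (map f xs))"
  using assms by (induction xs) (auto simp: sorted_wrt_append)

lemma sorted_verts: "sorted_wrt antilex_less (verts m)"
proof -
  have layer: "sorted_wrt antilex_less (concat (map (\<lambda>b. map (\<lambda>a. (a, b, c)) [0..<Suc m]) [0..<Suc m]))"
    for c
    by (rule sorted_wrt_concat_map[where P = "(<)"])
      (auto simp: sorted_wrt_map antilex_less_def simp del: upt_Suc)
  show ?thesis
    unfolding verts_def
    by (rule sorted_wrt_concat_map[where P = "(<)"])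
      (use layer in \<open>auto simp: antilex_less_def simp del: upt_Suc\<close>)
qed

lemma set_verts: "set (verts m) = grid m"
  by (auto simp: verts_def grid_def image_iff simp del: upt_Suc)

lemma in_Delta32_iff:
  "\<sigma> \<in> Delta32 m \<longleftrightarrow> \<sigma> \<subseteq> grid m \<and> finite \<sigma> \<and> (\<forall>p \<in> \<sigma>. \<forall>q \<in> \<sigma>. manhattan p q \<le> 2)"
  by (simp add: Delta32_def VR_def)

lemma manhattan_le_2_iff:
  "manhattan (x1, x2, x3) (y1, y2, y3) \<le> 2 \<longleftrightarrow>
     \<bar>int x1 - int y1\<bar> + \<bar>int x2 - int y2\<bar> + \<bar>int x3 - int y3\<bar> \<le> 2"
  by (simp add: manhattan_def) arith

definition square :: "nat \<Rightarrow> nat \<Rightarrow> nat \<Rightarrow> pt set" where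
  "square a b c = {(a, b, c), (Suc a, b, c), (a, Suc b, c), (Suc a, Suc b, c)}"

lemma close_to_square_imp_in_square:
  assumes "\<forall>q \<in> square a b c. manhattan (x, y, z) q \<le> 2"
  shows "(x, y, z) \<in> square a b c"
proof -
  have "\<bar>int x - int a\<bar> + \<bar>int y - int b\<bar> + \<bar>int z - int c\<bar> \<le> 2"
    "\<bar>int x - int a - 1\<bar> + \<bar>int y - int b\<bar> + \<bar>int z - int c\<bar> \<le> 2"
    "\<bar>int x - int a\<bar> + \<bar>int y - int b - 1\<bar> + \<bar>int z - int c\<bar> \<le> 2"
    "\<bar>int x - int a - 1\<bar> + \<bar>int y - int b - 1\<bar> + \<bar>int z - int c\<bar> \<le> 2"
    using assms by (simp_all add: square_def manhattan_le_2_iff algebra_simps)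
  then have "(x = a \<or> x = Suc a) \<and> (y = b \<or> y = Suc b) \<and> z = c"
    by arith
  then show ?thesis
    by (auto simp: square_def)
qed

lemma close_to_triangle_imp_apex:
  assumes "q1 = Suc p1 \<or> p1 = Suc q1" "q2 = Suc p2 \<or> p2 = Suc q2" "z \<le> c"
    and "\<forall>q \<in> {(p1, p2, Suc c), (q1, p2, Suc c), (p1, q2, Suc c)}. manhattan (x, y, z) q \<le> 2"
  shows "(x, y, z) = (p1, p2, c)"
proof -
  have "\<bar>int q1 - int p1\<bar> = 1" "\<bar>int q2 - int p2\<bar> = 1"
    using assms(1,2) by auto
  moreover have "\<bar>int x - int p1\<bar> + \<bar>int y - int p2\<bar> + (int c + 1 - int z) \<le> 2"
    "\<bar>int x - int q1\<bar> + \<bar>int y - int p2\<bar> + (int c + 1 - int z) \<le> 2"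
    "\<bar>int x - int p1\<bar> + \<bar>int y - int q2\<bar> + (int c + 1 - int z) \<le> 2"
    using assms(3,4) by (simp_all add: manhattan_le_2_iff)
  ultimately show ?thesis
    using assms(3) by simp arith
qed

lemma triangle_with_apex_below_in_Delta32:
  assumes "q1 = Suc p1 \<or> p1 = Suc q1" "q2 = Suc p2 \<or> p2 = Suc q2"
    and "p1 \<le> m" "q1 \<le> m" "p2 \<le> m" "q2 \<le> m" "c < m"
  shows "{(p1, p2, c), (p1, p2, Suc c), (q1, p2, Suc c), (p1, q2, Suc c)} \<in> Delta32 m"
  using assms(1,2) by (elim disjE) (use assms in \<open>auto simp: in_Delta32_iff grid_def manhattan_def\<close>)

lemma square_in_Delta32:
  assumes "a < m" "b < m" "c \<le> m"
  shows "square a b c \<in> Delta32 m"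
  using assms by (auto simp: in_Delta32_iff grid_def square_def manhattan_def)

lemma square_maximal:
  assumes "p \<notin> square a b c"
  shows "insert p (square a b c) \<notin> Delta32 m"
proof
  assume "insert p (square a b c) \<in> Delta32 m"
  then have "\<forall>q \<in> square a b c. manhattan p q \<le> 2"
    by (simp add: in_Delta32_iff)
  then show False
    using close_to_square_imp_in_square assms by (cases p) blast
qed

lemma square_facet_has_untouched_apex:
  assumes "a < m" "b < m" "c < m" "w \<in> square a b (Suc c)"
  shows "\<exists>u \<in> grid m. antilex_less u w \<and>
    untouched_apex antilex_less (Delta32 m) (square a b (Suc c) - {w}) u"
proof -
  obtain x y where w: "w = (x, y, Suc c)" "x = a \<or> x = Suc a" "y = b \<or> y = Suc b"
    using assms(4) by (auto simp: square_def)
  define x' where "x' = (if x = a then Suc a else a)"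
  define y' where "y' = (if y = b then Suc b else b)"
  have adjacent: "x = Suc x' \<or> x' = Suc x" "y = Suc y' \<or> y' = Suc y"
    using w by (auto simp: x'_def y'_def)
  define L where "L = {(x', y', Suc c), (x, y', Suc c), (x', y, Suc c)}"
  have facet: "square a b (Suc c) - {w} = L"
    using w by (auto simp: square_def L_def x'_def y'_def)
  define u where "u = (x', y', c)"
  have u: "u \<in> grid m" "antilex_less u w" "u \<notin> L"
    using assms w by (auto simp: u_def grid_def x'_def y'_def antilex_less_def L_def)
  have tetrahedron: "insert u L \<in> Delta32 m"
    unfolding L_def u_def
    by (rule triangle_with_apex_below_in_Delta32[OF adjacent]) (use assms w in \<open>auto simp: x'_def y'_def\<close>)
  have below: "p \<notin> insert u L \<and> insert p (insert u L) \<notin> Delta32 m"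
    if "antilex_less p u" for p
  proof -
    obtain x1 x2 x3 where p: "p = (x1, x2, x3)"
      by (cases p)
    with that have lower: "x3 \<le> c" "p \<noteq> u"
      by (auto simp: antilex_less_def u_def)
    have "insert p L \<notin> Delta32 m"
    proof
      assume "insert p L \<in> Delta32 m"
      then have "\<forall>q \<in> L. manhattan p q \<le> 2"
        by (simp add: in_Delta32_iff)
      then show False
        using close_to_triangle_imp_apex[OF adjacent lower(1)] p lower(2) by (simp add: L_def u_def)
    qed
    moreover have "p \<notin> L"
      using p lower(1) by (auto simp: L_def)
    ultimately show ?thesis
      using lower(2) by (auto simp: in_Delta32_iff)
  qed
  show ?thesis
    unfolding facet untouched_apex_def using u tetrahedron below by blast
qed

lemma square_critical:
  assumes "a < m" "b < m" "c < m"
  shows "square a b (Suc c) \<in> critical_cells m 3"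
proof -
  have "square a b (Suc c) \<in> fold T_step (verts m) (Delta32 m)"
  proof (rule maximal_simplex_with_untouched_apexes_survives[OF sorted_verts asymp_antilex_less])
    show "square a b (Suc c) \<in> Delta32 m"
      using assms by (simp add: square_in_Delta32)
    show "insert p (square a b (Suc c)) \<notin> Delta32 m" if "p \<notin> square a b (Suc c)" for p
      using square_maximal[OF that] .
    show "\<exists>u \<in> set (verts m). antilex_less u w \<and>
        untouched_apex antilex_less (Delta32 m) (square a b (Suc c) - {w}) u"
      if "w \<in> square a b (Suc c)" for w
      using square_facet_has_untouched_apex[OF assms that] unfolding set_verts .
  qed
  then show ?thesis
    by (simp add: critical_cells_def T_final_def square_def)
qed

lemma finite_critical_cells: "finite (critical_cells m d)"
proof (rule finite_subset)
  have "Delta32 m \<subseteq> Pow (grid m)"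
    by (auto simp: in_Delta32_iff)
  then show "critical_cells m d \<subseteq> Pow (grid m)"
    using fold_T_step_subset[of "verts m" "Delta32 m"]
    by (auto simp: critical_cells_def T_final_def)
  show "finite (Pow (grid m))"
    by (simp add: grid_def)
qed

lemma square_injective:
  assumes "square a b c = square a' b' c'"
  shows "(a, b, c) = (a', b', c')"
proof -
  have "(a, b, c) \<in> square a b c" "(a', b', c') \<in> square a' b' c'"
    by (simp_all add: square_def)
  then have "(a, b, c) \<in> square a' b' c'" "(a', b', c') \<in> square a b c"
    using assms by simp_all
  then show ?thesis
    unfolding square_def by auto
qed

lemma inj_on_square: "inj_on (\<lambda>(a, b, c). square a b (Suc c)) X"
  by (rule inj_onI) (auto dest: square_injective)

lemma cube_le_card_critical_cells_3: "m ^ 3 \<le> card (critical_cells m 3)"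
proof -
  let ?X = "{..<m} \<times> {..<m} \<times> {..<m}"
  have "m ^ 3 = card ((\<lambda>(a, b, c). square a b (Suc c)) ` ?X)"
    by (simp add: card_image[OF inj_on_square] card_cartesian_product power3_eq_cube)
  also have "\<dots> \<le> card (critical_cells m 3)"
    by (rule card_mono[OF finite_critical_cells]) (auto intro: square_critical)
  finally show ?thesis .
qed

theorem lemma4p11:
  fixes m :: nat
  assumes "m \<ge> 3"
  shows "(m - 2) ^ 3 \<le> card (critical_cells m 3)"
proof -
  have "(m - 2) ^ 3 \<le> m ^ 3"
    by (simp add: power_mono)
  also have "\<dots> \<le> card (critical_cells m 3)"
    by (rule cube_le_card_critical_cells_3)
  finally show ?thesis .
qed

end
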